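(* Let $\Phi$ be a channel matrix whose rows $P^1,\dots,P^4\in\Delta^n$ are in general position, let $Q^0$ be the equidistant point from $P^1,\dots,P^4$ with barycentric coordinate $\boldsymbol\lambda^0$, and suppose $\lambda^0_1<0$, $\lambda^0_2<0$, $\lambda^0_3\ge0$, $\lambda^0_4\ge0$. Let $Q^{1(1)}=\pi(Q^0|L(P^2,P^3,P^4))$ and $Q^{1(2)}=\pi(Q^0|L(P^1,P^3,P^4))$ with barycentric coordinates $\boldsymbol\lambda^{1(1)},\boldsymbol\lambda^{1(2)}$ about $P^1,\dots,P^4$, and suppose $\lambda^{1(2)}_1<0$. Suppose further $\lambda^{1(1)}_2<0$, $\lambda^{1(1)}_3\ge0$, $\lambda^{1(1)}_4\ge0$, and let $Q^2=\pi(Q^{1(1)}|L(P^3,P^4))$. Then the output distribution achieving the channel capacity is $Q^\ast=Q^2$ and the channel capacity is $C=D(P^3\|Q^2)$.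
   Context: $\Delta^n=\{Q:Q_j>0,\sum_jQ_j=1\}$, $\bar\Delta^m=\{\boldsymbol\lambda:\lambda_i\ge0,\sum_i\lambda_i=1\}$; $D(Q\|Q')=\sum_jQ_j\log(Q_j/Q'_j)$. Rows are in general position if $P^2-P^1,\dots,P^m-P^1$ are linearly independent. $L(S^1,\dots,S^r)=\{\sum_i\lambda_iS^i:\sum_i\lambda_i=1\}\cap\Delta^n$; for such an affine subspace $L$, $\pi(Q'|L)$ is the unique $Q\in L$ minimizing $D(Q\|Q')$. The barycentric coordinate of $Q\in L(P^1,\dots,P^m)$ is the unique $\boldsymbol\lambda$ with $\sum_i\lambda_i=1$, $Q=\sum_i\lambda_iP^i$. The equidistant point is the unique $Q^0\in L(P^1,\dots,P^m)$ with all $D(P^i\|Q^0)$ equal. Mutual information $I(\boldsymbol\lambda,\Phi)=\sum_{i,j}\lambda_iP^i_j\log(P^i_j/Q_j)$ with $Q=\boldsymbol\lambda\Phi$; capacity $C=\max_{\boldsymbol\lambda\in\bar\Delta^m}I(\boldsymbol\lambda,\Phi)$; the capacity-achieving output distribution is $Q^\ast=\boldsymbol\lambda^\ast\Phi$ for a maximizer $\boldsymbol\lambda^\ast$ (unique). *)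

theory Defs
  imports Complex_Main
begin

text \<open>Output alphabet: a finite type 'b. Distributions: functions 'b \<Rightarrow> real.
  Rows of the channel matrix: P :: nat \<Rightarrow> 'b \<Rightarrow> real, row i = P i.\<close>

definition open_simplex :: "('b::finite \<Rightarrow> real) set" where
  "open_simplex = {Q. (\<forall>j. Q j > 0) \<and> (\<Sum>j\<in>UNIV. Q j) = 1}"

definition closed_simplex :: "nat set \<Rightarrow> (nat \<Rightarrow> real) set" where
  "closed_simplex I = {l. (\<forall>i\<in>I. l i \<ge> 0) \<and> (\<forall>i. i \<notin> I \<longrightarrow> l i = 0) \<and> (\<Sum>i\<in>I. l i) = 1}"

definition KL :: "('b::finite \<Rightarrow> real) \<Rightarrow> ('b \<Rightarrow> real) \<Rightarrow> real" where
  "KL Q Q' = (\<Sum>j\<in>UNIV. Q j * ln (Q j / Q' j))"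

definition comb :: "(nat \<Rightarrow> 'b \<Rightarrow> real) \<Rightarrow> nat set \<Rightarrow> (nat \<Rightarrow> real) \<Rightarrow> ('b \<Rightarrow> real)" where
  "comb P I l = (\<lambda>j. \<Sum>i\<in>I. l i * P i j)"

definition general_position :: "(nat \<Rightarrow> 'b \<Rightarrow> real) \<Rightarrow> nat \<Rightarrow> bool" where
  "general_position P m \<longleftrightarrow>
     (\<forall>c. (\<forall>j. (\<Sum>i\<in>{2..m}. c i * (P i j - P 1 j)) = 0) \<longrightarrow> (\<forall>i\<in>{2..m}. c i = 0))"

definition aff_L :: "(nat \<Rightarrow> 'b::finite \<Rightarrow> real) \<Rightarrow> nat set \<Rightarrow> ('b \<Rightarrow> real) set" where
  "aff_L P I = {Q. \<exists>l. (\<Sum>i\<in>I. l i) = 1 \<and> Q = comb P I l} \<inter> open_simplex"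

definition proj :: "('b::finite \<Rightarrow> real) \<Rightarrow> ('b \<Rightarrow> real) set \<Rightarrow> ('b \<Rightarrow> real)" where
  "proj Q' L = (THE Q. Q \<in> L \<and> (\<forall>R\<in>L. KL Q Q' \<le> KL R Q'))"

definition bary :: "(nat \<Rightarrow> 'b \<Rightarrow> real) \<Rightarrow> nat set \<Rightarrow> ('b \<Rightarrow> real) \<Rightarrow> (nat \<Rightarrow> real)" where
  "bary P I Q = (THE l. (\<forall>i. i \<notin> I \<longrightarrow> l i = 0) \<and> (\<Sum>i\<in>I. l i) = 1 \<and> Q = comb P I l)"

definition equidistant :: "(nat \<Rightarrow> 'b::finite \<Rightarrow> real) \<Rightarrow> nat set \<Rightarrow> ('b \<Rightarrow> real)" where
  "equidistant P I = (THE Q. Q \<in> aff_L P I \<and> (\<forall>i\<in>I. \<forall>k\<in>I. KL (P i) Q = KL (P k) Q))"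

definition mutual_info :: "(nat \<Rightarrow> 'b::finite \<Rightarrow> real) \<Rightarrow> nat set \<Rightarrow> (nat \<Rightarrow> real) \<Rightarrow> real" where
  "mutual_info P I l = (\<Sum>i\<in>I. \<Sum>j\<in>UNIV. l i * P i j * ln (P i j / comb P I l j))"

definition capacity :: "(nat \<Rightarrow> 'b::finite \<Rightarrow> real) \<Rightarrow> nat set \<Rightarrow> real" where
  "capacity P I = (SUP l\<in>closed_simplex I. mutual_info P I l)"

end

theory Submission
  imports Defs "HOL-Analysis.Analysis" "HOL-Real_Asymp.Real_Asymp"
begin

text \<open>
  By the compensation identity
  \<open>\<Sum>\<^sub>i \<lambda>\<^sub>i (D(P\<^sup>i\<parallel>R) - D(P\<^sup>i\<parallel>Q\<^sub>\<lambda>)) = D(Q\<^sub>\<lambda>\<parallel>R)\<close>, the mutual information of \<open>\<lambda>\<close> equals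
  \<open>\<Sum>\<^sub>i \<lambda>\<^sub>i D(P\<^sup>i\<parallel>Q) - D(Q\<^sub>\<lambda>\<parallel>Q)\<close> for every \<open>Q\<close>. Hence if the output \<open>Q\<close> of some input
  satisfies \<open>D(P\<^sup>i\<parallel>Q) \<le> r\<close> for all \<open>i\<close>, with equality on the support of the input, then
  \<open>C = r\<close> and every optimal input has output \<open>Q\<close>. We check this for \<open>Q\<^sup>2\<close> and \<open>r = D(P\<^sup>3\<parallel>Q\<^sup>2)\<close>.

  Information projections onto \<open>L\<close> satisfy a Pythagorean identity, so projecting a point
  equidistant from the rows onto a face keeps it equidistant from the rows of that face; thus
  \<open>Q\<^sup>1\<^sup>(\<^sup>1\<^sup>)\<close>, \<open>Q\<^sup>1\<^sup>(\<^sup>2\<^sup>)\<close> and \<open>Q\<^sup>2\<close> are equidistant. If a vertex has negative weight in a point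
  equidistant from a face, the compensation identities at that point and at the equidistant point
  of the opposite subface show that the vertex is no farther from the latter than the subface's
  vertices. Applied to \<open>\<lambda>\<^sup>1\<^sup>(\<^sup>1\<^sup>)\<^sub>2 < 0\<close> and \<open>\<lambda>\<^sup>1\<^sup>(\<^sup>2\<^sup>)\<^sub>1 < 0\<close> this bounds \<open>D(P\<^sup>2\<parallel>Q\<^sup>2)\<close> and
  \<open>D(P\<^sup>1\<parallel>Q\<^sup>2)\<close> by \<open>D(P\<^sup>3\<parallel>Q\<^sup>2)\<close>; finally, a point of the line through \<open>P\<^sup>3 \<noteq> P\<^sup>4\<close> that is
  equidistant from both lies between them, so \<open>Q\<^sup>2\<close> is an output distribution.
\<close>

section \<open>Kullback--Leibler divergence\<close>

lemma open_simplex_pos: "Q \<in> open_simplex \<Longrightarrow> Q j > 0"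
  by (simp add: open_simplex_def)

lemma open_simplex_sum: "Q \<in> open_simplex \<Longrightarrow> (\<Sum>j\<in>UNIV. Q j) = 1"
  by (simp add: open_simplex_def)

lemma open_simplex_le_1:
  assumes "Q \<in> open_simplex" shows "Q j \<le> 1"
proof -
  have "Q j \<le> (\<Sum>j\<in>UNIV. Q j)"
    by (rule member_le_sum) (auto intro: less_imp_le open_simplex_pos[OF assms])
  then show ?thesis using open_simplex_sum[OF assms] by simp
qed

lemma KL_eq_sum_ln_diff:
  assumes "\<And>j. Q j > 0" "\<And>j. R j > 0"
  shows "KL Q R = (\<Sum>j\<in>UNIV. Q j * (ln (Q j) - ln (R j)))"
  unfolding KL_def using assms by (intro sum.cong refl) (simp add: ln_div less_imp_neq[symmetric])

lemma KL_self: "KL Q Q = 0"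
  unfolding KL_def by (intro sum.neutral) auto

lemma mult_ln_diff_ge:
  fixes x y :: real assumes "0 < x" "0 < y"
  shows "x - y \<le> x * (ln x - ln y)"
proof -
  have "ln y - ln x \<le> y / x - 1"
    using ln_le_minus_one[of "y / x"] assms by (simp add: ln_div)
  then have "x * (ln y - ln x) \<le> x * (y / x - 1)" using assms by (intro mult_left_mono) auto
  then show ?thesis using assms by (simp add: algebra_simps)
qed

lemma mult_ln_diff_eq_imp_eq:
  fixes x y :: real assumes "0 < x" "0 < y" "x * (ln x - ln y) = x - y"
  shows "x = y"
proof -
  have "x * (ln y - ln x) = x * (y / x - 1)" using assms by (simp add: algebra_simps)
  then have "ln (y / x) = y / x - 1" using assms by (simp add: ln_div)
  then have "y / x = 1" using assms by (intro ln_eq_minus_one) auto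
  then show ?thesis using assms by simp
qed

text \<open>Both distributions have mass one, which makes every summand nonnegative.\<close>
lemma KL_eq_sum_nonneg_terms:
  assumes "Q \<in> open_simplex" "R \<in> open_simplex"
  shows "KL Q R = (\<Sum>j\<in>UNIV. Q j * (ln (Q j) - ln (R j)) - (Q j - R j))"
  using assms
  by (simp add: KL_eq_sum_ln_diff open_simplex_pos open_simplex_sum sum_subtractf)

lemma KL_nonneg:
  assumes "Q \<in> open_simplex" "R \<in> open_simplex"
  shows "0 \<le> KL Q R"
  unfolding KL_eq_sum_nonneg_terms[OF assms]
  by (rule sum_nonneg) (simp add: mult_ln_diff_ge open_simplex_pos assms)

lemma KL_eq_0_iff:
  assumes "Q \<in> open_simplex" "R \<in> open_simplex"
  shows "KL Q R = 0 \<longleftrightarrow> Q = R"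
proof
  assume "KL Q R = 0"
  then have "\<forall>j\<in>UNIV. Q j * (ln (Q j) - ln (R j)) - (Q j - R j) = 0"
    unfolding KL_eq_sum_nonneg_terms[OF assms]
    by (subst (asm) sum_nonneg_eq_0_iff) (auto simp: mult_ln_diff_ge open_simplex_pos assms)
  then show "Q = R"
    by (auto intro: mult_ln_diff_eq_imp_eq open_simplex_pos assms)
qed (simp add: KL_self)

lemma sum_comb:
  assumes "\<forall>i\<in>I. P i \<in> open_simplex"
  shows "(\<Sum>j\<in>UNIV. comb P I l j) = sum l I"
proof -
  have "(\<Sum>j\<in>UNIV. comb P I l j) = (\<Sum>i\<in>I. l i * (\<Sum>j\<in>UNIV. P i j))"
    unfolding comb_def by (subst sum.swap) (simp add: sum_distrib_left)
  also have "\<dots> = sum l I" using assms by (simp add: open_simplex_sum)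
  finally show ?thesis .
qed

lemma sum_comb_mult:
  "(\<Sum>j\<in>UNIV. comb P I l j * w j) = (\<Sum>i\<in>I. l i * (\<Sum>j\<in>UNIV. P i j * w j))"
  unfolding comb_def
  by (simp add: sum_distrib_right sum_distrib_left mult.assoc) (rule sum.swap)

lemma KL_compensation:
  assumes "\<forall>i\<in>I. P i \<in> open_simplex" "R \<in> open_simplex" "S \<in> open_simplex"
    and "S = comb P I l"
  shows "(\<Sum>i\<in>I. l i * (KL (P i) R - KL (P i) S)) = KL S R"
proof -
  have "(\<Sum>i\<in>I. l i * (KL (P i) R - KL (P i) S))
      = (\<Sum>i\<in>I. l i * (\<Sum>j\<in>UNIV. P i j * (ln (S j) - ln (R j))))"
    using assms(1-3)
    by (intro sum.cong refl) (simp add: KL_eq_sum_ln_diff open_simplex_pos algebra_simps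
        flip: sum_subtractf)
  also have "\<dots> = KL S R"
    using assms by (simp add: KL_eq_sum_ln_diff open_simplex_pos flip: sum_comb_mult)
  finally show ?thesis .
qed

section \<open>Information projection onto affine families\<close>

definition aff_rows :: "(nat \<Rightarrow> 'b \<Rightarrow> real) \<Rightarrow> nat set \<Rightarrow> ('b \<Rightarrow> real) set" where
  "aff_rows P I = {Q. \<exists>l. sum l I = 1 \<and> Q = comb P I l}"

lemma aff_L_iff:
  assumes "\<forall>i\<in>I. P i \<in> open_simplex"
  shows "Q \<in> aff_L P I \<longleftrightarrow> Q \<in> aff_rows P I \<and> (\<forall>j. Q j > 0)"
  using assms by (auto simp: aff_L_def aff_rows_def open_simplex_def sum_comb)

lemma aff_L_open_simplex: "Q \<in> aff_L P I \<Longrightarrow> Q \<in> open_simplex"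
  by (simp add: aff_L_def)

lemma comb_add_scaled:
  "comb P I (\<lambda>i. l i + t * m i) = (\<lambda>j. comb P I l j + t * comb P I m j)"
  by (simp add: comb_def sum.distrib sum_distrib_left algebra_simps)

lemma comb_indicator:
  assumes "finite I" "k \<in> I"
  shows "comb P I (\<lambda>i. if i = k then 1 else 0) = P k"
  using assms by (simp add: comb_def fun_eq_iff if_distrib[of "\<lambda>x. x * _"] cong: if_cong)

lemma aff_rows_row: "finite I \<Longrightarrow> k \<in> I \<Longrightarrow> P k \<in> aff_rows P I"
  unfolding aff_rows_def
  by (intro CollectI exI[of _ "\<lambda>i. if i = k then 1 else 0"]) (simp add: comb_indicator)

lemma aff_rows_add_scaled:
  assumes "Q \<in> aff_rows P I" "R \<in> aff_rows P I" "S \<in> aff_rows P I"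
  shows "(\<lambda>j. Q j + t * (R j - S j)) \<in> aff_rows P I"
proof -
  obtain l m n where "sum l I = 1" "Q = comb P I l" "sum m I = 1" "R = comb P I m"
    "sum n I = 1" "S = comb P I n"
    using assms by (auto simp: aff_rows_def)
  then show ?thesis
    unfolding aff_rows_def
    by (intro CollectI exI[of _ "\<lambda>i. l i + t * (m i - n i)"])
       (simp add: comb_add_scaled sum.distrib sum_subtractf flip: sum_distrib_left,
        simp add: comb_def sum_subtractf algebra_simps flip: sum_distrib_left)
qed

lemma continuous_on_mult_ln_div:
  assumes "a > 0" shows "continuous_on {0..} (\<lambda>x::real. x * ln (x / a))"
proof -
  have xlnx: "continuous_on {0..} (\<lambda>x::real. x * ln x)"
    unfolding continuous_on_eq_continuous_within
  proof
    fix x :: real assume "x \<in> {0..}"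
    show "continuous (at x within {0..}) (\<lambda>x. x * ln x)"
    proof (cases "x = 0")
      case True
      have "((\<lambda>x::real. x * ln x) \<longlongrightarrow> 0) (at_right 0)" by real_asymp
      then show ?thesis using True by (simp add: continuous_within at_within_Ici_at_right)
    next
      case False
      with \<open>x \<in> {0..}\<close> show ?thesis by (intro continuous_intros) auto
    qed
  qed
  have "continuous_on {0..} (\<lambda>x::real. x * ln x - x * ln a)"
    by (intro continuous_on_diff[OF xlnx] continuous_intros)
  then show ?thesis
    by (rule continuous_on_cong[THEN iffD1, rotated 2])
       (use assms in \<open>auto simp: ln_div right_diff_distrib\<close>)
qed

lemma KL_attains_min_nonneg:
  fixes P :: "nat \<Rightarrow> 'b::finite \<Rightarrow> real"
  assumes I: "finite I" "I \<noteq> {}" and rows: "\<forall>i\<in>I. P i \<in> open_simplex"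
    and Q': "Q' \<in> open_simplex"
  obtains Q where "Q \<in> aff_rows P I" "\<forall>j. 0 \<le> Q j"
    "\<And>R. R \<in> aff_rows P I \<Longrightarrow> \<forall>j. 0 \<le> R j \<Longrightarrow> KL Q Q' \<le> KL R Q'"
proof -
  obtain k where "k \<in> I" using I(2) by blast
  define K where "K = {x::real^'b. (\<forall>j. 0 \<le> x$j) \<and> vec_nth x \<in> aff_rows P I}"
  have "affine {x::real^'b. vec_nth x \<in> aff_rows P I}"
    unfolding affine_def
  proof (intro allI impI ballI)
    fix x y :: "real^'b" and u v :: real
    assume "x \<in> {x. vec_nth x \<in> aff_rows P I}" "y \<in> {x. vec_nth x \<in> aff_rows P I}" "u + v = 1"
    then have "(\<lambda>j. x$j + v * (y$j - x$j)) \<in> aff_rows P I"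
      by (intro aff_rows_add_scaled) auto
    moreover from \<open>u + v = 1\<close> have u: "u = 1 - v" by linarith
    have "vec_nth (u *\<^sub>R x + v *\<^sub>R y) = (\<lambda>j. x$j + v * (y$j - x$j))"
      unfolding u by (simp add: fun_eq_iff algebra_simps)
    ultimately show "u *\<^sub>R x + v *\<^sub>R y \<in> {x. vec_nth x \<in> aff_rows P I}" by simp
  qed
  moreover have "closed {x::real^'b. \<forall>j. 0 \<le> x$j}"
    by (intro closed_Collect_all closed_Collect_le continuous_intros)
  moreover have "K = {x::real^'b. \<forall>j. 0 \<le> x$j} \<inter> {x. vec_nth x \<in> aff_rows P I}"
    by (auto simp: K_def)
  ultimately have "closed K" using affine_closed by auto
  moreover have "K \<subseteq> cbox 0 1"
  proof
    fix x assume x: "x \<in> K"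
    then obtain l where "sum l I = 1" "vec_nth x = comb P I l" by (auto simp: K_def aff_rows_def)
    then have "(\<Sum>j\<in>UNIV. x$j) = 1" using sum_comb[OF rows] by metis
    moreover have "x$j \<le> (\<Sum>j\<in>UNIV. x$j)" for j
      by (rule member_le_sum) (use x in \<open>auto simp: K_def\<close>)
    ultimately show "x \<in> cbox 0 1" using x by (auto simp: mem_box_cart K_def)
  qed
  ultimately have "compact K"
    by (metis compact_Int_closed compact_cbox inf.absorb_iff2)
  moreover have "vec_lambda (P k) \<in> K"
    using aff_rows_row[OF I(1) \<open>k \<in> I\<close>] rows \<open>k \<in> I\<close> open_simplex_pos[of "P k"]
    by (auto simp: K_def less_imp_le vec_lambda_inverse)
  moreover have "continuous_on K (\<lambda>x. KL (vec_nth x) Q')"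
    unfolding KL_def
    by (intro continuous_on_sum continuous_on_compose2[OF continuous_on_mult_ln_div]
        continuous_intros) (auto intro: open_simplex_pos[OF Q'] simp: K_def)
  ultimately obtain x where "x \<in> K" "\<forall>y\<in>K. KL (vec_nth x) Q' \<le> KL (vec_nth y) Q'"
    using continuous_attains_inf by blast
  then show ?thesis
    by (intro that[of "vec_nth x"]) (auto simp: K_def,
        metis vec_lambda_inverse UNIV_I)
qed

lemma mult_ln_div_mix_le:
  fixes x y a t :: real
  assumes "0 \<le> x" "0 < y" "0 < a" "0 < t" "t < 1"
  shows "((1-t)*x + t*y) * ln (((1-t)*x + t*y) / a)
           \<le> (1-t) * (x * ln (x / a)) + t * (y * ln (y / a)) + (if x = 0 then t * ln t * y else 0)"
proof (cases "x = 0")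
  case True
  then show ?thesis using assms by (simp add: ln_div ln_mult algebra_simps)
next
  case False
  define m where "m = (1-t)*x + t*y"
  have "0 < x" "0 < m" using assms False unfolding m_def by (auto intro: add_nonneg_pos)
  have "(1-t) * (x - m) \<le> (1-t) * (x * (ln x - ln m))" "t * (y - m) \<le> t * (y * (ln y - ln m))"
    using mult_ln_diff_ge \<open>0 < x\<close> \<open>0 < m\<close> assms by (auto intro: mult_left_mono)
  moreover have "(1-t) * (x - m) + t * (y - m) = 0" unfolding m_def by (simp add: algebra_simps)
  moreover have "(1-t) * (x * ln (x / a)) + t * (y * ln (y / a)) - m * ln (m / a)
        = (1-t) * (x * (ln x - ln m)) + t * (y * (ln y - ln m))"
    using assms \<open>0 < x\<close> \<open>0 < m\<close> by (simp add: ln_div m_def algebra_simps)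
  ultimately have "m * ln (m / a) \<le> (1-t) * (x * ln (x / a)) + t * (y * ln (y / a))" by linarith
  with False show ?thesis unfolding m_def by simp
qed

text \<open>At a coordinate where \<open>Q\<close> vanishes, moving towards a positive point by \<open>t\<close> changes
  the divergence by \<open>t ln t\<close> times a positive constant, which beats every linear term.\<close>
lemma KL_min_pos:
  fixes P :: "nat \<Rightarrow> 'b::finite \<Rightarrow> real"
  assumes I: "finite I" "I \<noteq> {}" and rows: "\<forall>i\<in>I. P i \<in> open_simplex"
    and Q': "Q' \<in> open_simplex"
    and Q: "Q \<in> aff_rows P I" "\<forall>j. 0 \<le> Q j"
    and min: "\<And>R. R \<in> aff_rows P I \<Longrightarrow> \<forall>j. 0 \<le> R j \<Longrightarrow> KL Q Q' \<le> KL R Q'"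
  shows "Q j > 0"
proof (rule ccontr)
  assume "\<not> Q j > 0"
  with Q(2) have "Q j = 0" by (metis less_eq_real_def)
  obtain k where "k \<in> I" using I(2) by blast
  define R where "R = P k"
  have R: "\<And>j. R j > 0" "R \<in> aff_rows P I"
    using rows I(1) \<open>k \<in> I\<close> open_simplex_pos aff_rows_row unfolding R_def by blast+
  define s where "s = (\<Sum>j\<in>UNIV. if Q j = 0 then R j else 0)"
  have "R j \<le> s"
    unfolding s_def
    using member_le_sum[of j UNIV "\<lambda>j. if Q j = 0 then R j else 0"] \<open>Q j = 0\<close> R(1)
    by (simp add: less_imp_le)
  then have "s > 0" using R(1)[of j] by linarith
  define C where "C = KL R Q' - KL Q Q'"
  define t where "t = exp (- (\<bar>C\<bar> + 1) / s)"
  have t: "0 < t" "t < 1" "ln t * s = - (\<bar>C\<bar> + 1)"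
    unfolding t_def using \<open>s > 0\<close> by (simp_all add: field_simps)
  define Qt where "Qt = (\<lambda>j. Q j + t * (R j - Q j))"
  have Qt_nonneg: "0 \<le> Qt j" for j
  proof -
    have "0 \<le> (1 - t) * Q j + t * R j" using Q(2) R(1)[of j] t(1,2) by (simp add: less_imp_le)
    then show ?thesis unfolding Qt_def by (simp add: algebra_simps)
  qed
  have "Qt \<in> aff_rows P I" unfolding Qt_def by (rule aff_rows_add_scaled[OF Q(1) R(2) Q(1)])
  then have "KL Q Q' \<le> KL Qt Q'" using Qt_nonneg by (simp add: min)
  also have "KL Qt Q' \<le> (\<Sum>j\<in>UNIV. (1-t) * (Q j * ln (Q j / Q' j)) + t * (R j * ln (R j / Q' j))
                              + (if Q j = 0 then t * ln t * R j else 0))"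
    unfolding KL_def
  proof (rule sum_mono)
    fix j
    have "Qt j = (1-t) * Q j + t * R j" by (simp add: Qt_def algebra_simps)
    then show "Qt j * ln (Qt j / Q' j) \<le> (1-t) * (Q j * ln (Q j / Q' j)) + t * (R j * ln (R j / Q' j))
                              + (if Q j = 0 then t * ln t * R j else 0)"
      using mult_ln_div_mix_le[OF _ R(1) open_simplex_pos[OF Q'] t(1,2)] Q(2) by simp
  qed
  also have "\<dots> = (1-t) * KL Q Q' + t * KL R Q' + t * ln t * s"
    unfolding KL_def s_def
    by (simp add: sum.distrib sum_distrib_left if_distrib[of "\<lambda>x. t * ln t * x"] cong: if_cong)
  also have "\<dots> = KL Q Q' + t * (C + ln t * s)"
    unfolding C_def by (simp add: algebra_simps)
  also have "\<dots> < KL Q Q'"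
    using t by (simp add: mult_pos_neg)
  finally show False by simp
qed

lemma KL_deriv_along:
  fixes Q Q' d :: "'b::finite \<Rightarrow> real"
  assumes "\<And>j. Q j > 0" "\<And>j. Q' j > 0"
  shows "((\<lambda>t. KL (\<lambda>j. Q j + t * d j) Q') has_real_derivative
           (\<Sum>j\<in>UNIV. d j * (ln (Q j / Q' j) + 1))) (at 0)"
  unfolding KL_def using assms
  by (auto intro!: derivative_eq_intros sum.cong
      simp: field_simps assms[THEN less_imp_neq, symmetric])

lemma KL_min_stationary:
  fixes P :: "nat \<Rightarrow> 'b::finite \<Rightarrow> real"
  assumes rows: "\<forall>i\<in>I. P i \<in> open_simplex" and I: "finite I" "i \<in> I" "k \<in> I"
    and Q': "Q' \<in> open_simplex" and Q: "Q \<in> aff_L P I"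
    and min: "\<forall>R\<in>aff_L P I. KL Q Q' \<le> KL R Q'"
  shows "(\<Sum>j\<in>UNIV. (P i j - P k j) * (ln (Q j) - ln (Q' j))) = 0"
proof -
  define d where "d j = P i j - P k j" for j
  have Qpos: "\<And>j. Q j > 0" using Q aff_L_iff[OF rows] by blast
  have Q'pos: "\<And>j. Q' j > 0" using Q' open_simplex_pos by blast
  define \<delta> where "\<delta> = Min (range Q)"
  have "\<delta> > 0" "\<And>j. \<delta> \<le> Q j" unfolding \<delta>_def using Qpos by auto
  have "\<bar>d j\<bar> \<le> 1" for j
    using rows I open_simplex_pos open_simplex_le_1 unfolding d_def
    by (smt (verit, best))
  have local_min: "KL Q Q' \<le> KL (\<lambda>j. Q j + t * d j) Q'" if "\<bar>0 - t\<bar> < \<delta>" for t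
  proof -
    have "(\<lambda>j. Q j + t * d j) \<in> aff_rows P I"
      unfolding d_def using aff_L_iff[OF rows] Q aff_rows_row I by (blast intro: aff_rows_add_scaled)
    moreover have "Q j + t * d j > 0" for j
    proof -
      have "\<bar>t * d j\<bar> \<le> \<bar>t\<bar>" using \<open>\<bar>d j\<bar> \<le> 1\<close> by (simp add: abs_mult mult_left_le)
      then show ?thesis using that \<open>\<delta> \<le> Q j\<close> by linarith
    qed
    ultimately show ?thesis using min aff_L_iff[OF rows] by blast
  qed
  have "((\<lambda>t. KL (\<lambda>j. Q j + t * d j) Q') has_real_derivative
           (\<Sum>j\<in>UNIV. d j * (ln (Q j / Q' j) + 1))) (at 0)"
    by (rule KL_deriv_along) (use Qpos Q'pos in auto)
  moreover have "\<forall>t. \<bar>0 - t\<bar> < \<delta> \<longrightarrow> KL (\<lambda>j. Q j + 0 * d j) Q' \<le> KL (\<lambda>j. Q j + t * d j) Q'"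
    using local_min by simp
  ultimately have "(\<Sum>j\<in>UNIV. d j * (ln (Q j / Q' j) + 1)) = 0"
    using DERIV_local_min \<open>\<delta> > 0\<close> by blast
  moreover have "(\<Sum>j\<in>UNIV. d j) = 0"
    using rows I unfolding d_def by (simp add: sum_subtractf open_simplex_sum)
  ultimately have "(\<Sum>j\<in>UNIV. d j * ln (Q j / Q' j)) = 0"
    by (simp add: distrib_left sum.distrib)
  moreover have "ln (Q j / Q' j) = ln (Q j) - ln (Q' j)" for j
    using Qpos[of j] Q'pos[of j] by (simp add: ln_div)
  ultimately show ?thesis by (simp add: d_def)
qed

lemma KL_diff_eq_sum:
  assumes "\<And>j. R j > 0" "\<And>j. Q j > 0" "\<And>j. Q' j > 0"
  shows "KL R Q' - KL R Q = (\<Sum>j\<in>UNIV. R j * (ln (Q j) - ln (Q' j)))"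
  using assms by (simp add: KL_eq_sum_ln_diff algebra_simps flip: sum_subtractf)

lemma row_in_aff_L: "finite I \<Longrightarrow> k \<in> I \<Longrightarrow> \<forall>i\<in>I. P i \<in> open_simplex \<Longrightarrow> P k \<in> aff_L P I"
  by (simp add: aff_L_iff aff_rows_row open_simplex_pos)

lemma
  fixes P :: "nat \<Rightarrow> 'b::finite \<Rightarrow> real"
  assumes I: "finite I" "I \<noteq> {}" and rows: "\<forall>i\<in>I. P i \<in> open_simplex"
    and Q': "Q' \<in> open_simplex"
  shows proj_in_aff_L: "proj Q' (aff_L P I) \<in> aff_L P I"
    and KL_proj_pythagoras: "R \<in> aff_L P I \<Longrightarrow>
           KL R Q' = KL R (proj Q' (aff_L P I)) + KL (proj Q' (aff_L P I)) Q'"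
proof -
  obtain Q where Q: "Q \<in> aff_rows P I" "\<forall>j. 0 \<le> Q j"
    and min: "\<And>R. R \<in> aff_rows P I \<Longrightarrow> \<forall>j. 0 \<le> R j \<Longrightarrow> KL Q Q' \<le> KL R Q'"
    using KL_attains_min_nonneg[OF I rows Q'] by blast
  have Qpos: "\<And>j. Q j > 0" by (rule KL_min_pos[OF I rows Q' Q min])
  have QL: "Q \<in> aff_L P I" using Q(1) Qpos aff_L_iff[OF rows] by blast
  have minL: "\<forall>R\<in>aff_L P I. KL Q Q' \<le> KL R Q'"
    using min aff_L_iff[OF rows] by (auto intro: less_imp_le)
  have Q'pos: "\<And>j. Q' j > 0" using Q' open_simplex_pos by blast
  obtain k where "k \<in> I" using I(2) by blast
  define w where "w j = ln (Q j) - ln (Q' j)" for j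
  define c where "c = (\<Sum>j\<in>UNIV. P k j * w j)"
  have orth: "(\<Sum>j\<in>UNIV. P i j * w j) = c" if "i \<in> I" for i
    using KL_min_stationary[OF rows I(1) that \<open>k \<in> I\<close> Q' QL minL]
    unfolding c_def w_def by (simp add: left_diff_distrib sum_subtractf)
  have pyth: "KL R Q' = KL R Q + c" if R: "R \<in> aff_L P I" for R
  proof -
    obtain m where m: "sum m I = 1" "R = comb P I m" using R by (auto simp: aff_L_def)
    have "\<And>j. R j > 0" using R aff_L_iff[OF rows] by blast
    then have "KL R Q' - KL R Q = (\<Sum>j\<in>UNIV. comb P I m j * w j)"
      using KL_diff_eq_sum Qpos Q'pos m(2) unfolding w_def by blast
    also have "\<dots> = c" using orth m(1) by (simp add: sum_comb_mult flip: sum_distrib_right)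
    finally show ?thesis by simp
  qed
  have "proj Q' (aff_L P I) = Q"
    unfolding proj_def
  proof (rule the_equality)
    fix R assume R: "R \<in> aff_L P I \<and> (\<forall>S\<in>aff_L P I. KL R Q' \<le> KL S Q')"
    then have "KL R Q \<le> 0" using pyth[of R] pyth[OF QL] QL by (force simp: KL_self)
    then show "R = Q"
      using KL_nonneg KL_eq_0_iff R QL aff_L_open_simplex by (metis order_antisym)
  qed (use QL minL in blast)
  then show "proj Q' (aff_L P I) \<in> aff_L P I" using QL by simp
  show "R \<in> aff_L P I \<Longrightarrow> KL R Q' = KL R (proj Q' (aff_L P I)) + KL (proj Q' (aff_L P I)) Q'"
    using pyth pyth[OF QL] \<open>proj Q' (aff_L P I) = Q\<close> by (simp add: KL_self)
qed

section \<open>General position and barycentric coordinates\<close>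

lemma general_position_4D:
  assumes "general_position P 4"
    and "\<forall>j. a * (P 2 j - P 1 j) + b * (P 3 j - P 1 j) + c * (P 4 j - P 1 j) = 0"
  shows "a = 0 \<and> b = 0 \<and> c = 0"
proof -
  define f :: "nat \<Rightarrow> real" where "f i = (if i = 2 then a else if i = 3 then b else c)" for i
  have "{2..4::nat} = {2,3,4}" by auto
  with assms show ?thesis
    unfolding general_position_def by (force simp: f_def add.assoc elim!: allE[of _ f])
qed

lemma bary_comb:
  assumes gp: "general_position P m"
    and l: "\<forall>i. i \<notin> {1..m} \<longrightarrow> l i = 0" "sum l {1..m} = 1"
  shows "bary P {1..m} (comb P {1..m} l) = l"
  unfolding bary_def
proof (rule the_equality)
  fix l' assume l': "(\<forall>i. i \<notin> {1..m} \<longrightarrow> l' i = 0) \<and> sum l' {1..m} = 1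
                     \<and> comb P {1..m} l = comb P {1..m} l'"
  define c where "c i = l' i - l i" for i
  have "m \<ge> 1" using l(2) by (cases m) auto
  then have split: "{1..m} = insert 1 {2..m}" by auto
  have "sum c {1..m} = 0" using l l' by (simp add: c_def sum_subtractf)
  then have sum_c: "sum c {2..m} = - c 1" using split by simp
  have comb_c: "c 1 * P 1 j + (\<Sum>i\<in>{2..m}. c i * P i j) = 0" for j
  proof -
    have "comb P {1..m} l' j - comb P {1..m} l j = 0" using l' by simp
    then have "(\<Sum>i\<in>{1..m}. c i * P i j) = 0"
      by (simp add: comb_def c_def left_diff_distrib sum_subtractf)
    then show ?thesis using split by simp
  qed
  have "(\<Sum>i\<in>{2..m}. c i * (P i j - P 1 j)) = 0" for j
  proof -
    have "(\<Sum>i\<in>{2..m}. c i * (P i j - P 1 j)) = (\<Sum>i\<in>{2..m}. c i * P i j) - sum c {2..m} * P 1 j"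
      by (simp add: right_diff_distrib sum_subtractf sum_distrib_right)
    then show ?thesis using sum_c comb_c[of j] by simp
  qed
  then have "\<forall>i\<in>{2..m}. c i = 0" using gp unfolding general_position_def by blast
  with sum_c have "\<forall>i\<in>{1..m}. c i = 0" using split by simp
  then show "l' = l" using l l' unfolding c_def by (metis eq_iff_diff_eq_0 ext)
qed (use l in auto)

lemma bary_aff_L:
  assumes gp: "general_position P m" and J: "J \<subseteq> {1..m}" and Q: "Q \<in> aff_L P J"
  shows "sum (bary P {1..m} Q) J = 1" "Q = comb P J (bary P {1..m} Q)"
proof -
  obtain l where l: "sum l J = 1" "Q = comb P J l" using Q by (auto simp: aff_L_def)
  define l' where "l' i = (if i \<in> J then l i else 0)" for i
  have "sum l' {1..m} = sum l' J"
    by (rule sum.mono_neutral_right) (use J in \<open>auto simp: l'_def\<close>)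
  moreover have "comb P {1..m} l' = comb P J l'"
    unfolding comb_def by (rule ext, rule sum.mono_neutral_right) (use J in \<open>auto simp: l'_def\<close>)
  moreover have "sum l' J = 1" "comb P J l' = Q" using l by (simp_all add: l'_def comb_def)
  moreover have "\<forall>i. i \<notin> {1..m} \<longrightarrow> l' i = 0" using J by (auto simp: l'_def)
  ultimately have "bary P {1..m} Q = l'" using bary_comb[OF gp, of l'] by simp
  then show "sum (bary P {1..m} Q) J = 1" "Q = comb P J (bary P {1..m} Q)"
    using \<open>sum l' J = 1\<close> \<open>comb P J l' = Q\<close> by simp_all
qed

section \<open>Equidistant points\<close>

definition KL_equidistant :: "(nat \<Rightarrow> 'b::finite \<Rightarrow> real) \<Rightarrow> nat set \<Rightarrow> ('b \<Rightarrow> real) \<Rightarrow> bool" where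
  "KL_equidistant P I Q \<longleftrightarrow> (\<exists>r. \<forall>i\<in>I. KL (P i) Q = r)"

lemma KL_equidistant_iff: "KL_equidistant P I Q \<longleftrightarrow> (\<forall>i\<in>I. \<forall>k\<in>I. KL (P i) Q = KL (P k) Q)"
proof
  assume equi: "\<forall>i\<in>I. \<forall>k\<in>I. KL (P i) Q = KL (P k) Q"
  show "KL_equidistant P I Q"
  proof (cases "I = {}")
    case False
    then obtain k where "k \<in> I" by blast
    with equi show ?thesis unfolding KL_equidistant_def by blast
  qed (simp add: KL_equidistant_def)
qed (auto simp: KL_equidistant_def)

lemma KL_equidistant_subset: "J \<subseteq> I \<Longrightarrow> KL_equidistant P I Q \<Longrightarrow> KL_equidistant P J Q"
  unfolding KL_equidistant_def by blast

lemma proj_KL_equidistant: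
  fixes P :: "nat \<Rightarrow> 'b::finite \<Rightarrow> real"
  assumes "finite I" "I \<noteq> {}" "\<forall>i\<in>I. P i \<in> open_simplex" "Q' \<in> open_simplex"
    and "KL_equidistant P I Q'"
  shows "KL_equidistant P I (proj Q' (aff_L P I))"
proof -
  obtain r where r: "\<forall>i\<in>I. KL (P i) Q' = r" using assms(5) by (auto simp: KL_equidistant_def)
  have "KL (P i) (proj Q' (aff_L P I)) = r - KL (proj Q' (aff_L P I)) Q'" if "i \<in> I" for i
    using KL_proj_pythagoras[OF assms(1-4) row_in_aff_L[OF assms(1) that assms(3)]] r that by simp
  then show ?thesis unfolding KL_equidistant_def by blast
qed

lemma aff_L_KL_equidistant_unique:
  fixes P :: "nat \<Rightarrow> 'b::finite \<Rightarrow> real"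
  assumes rows: "\<forall>i\<in>I. P i \<in> open_simplex"
    and R: "R \<in> aff_L P I" "KL_equidistant P I R"
    and R': "R' \<in> aff_L P I" "KL_equidistant P I R'"
  shows "R = R'"
proof -
  obtain r r' where r: "\<forall>i\<in>I. KL (P i) R = r" and r': "\<forall>i\<in>I. KL (P i) R' = r'"
    using R(2) R'(2) by (auto simp: KL_equidistant_def)
  obtain l where l: "sum l I = 1" "R = comb P I l" using R(1) by (auto simp: aff_L_def)
  obtain m where m: "sum m I = 1" "R' = comb P I m" using R'(1) by (auto simp: aff_L_def)
  have os: "R \<in> open_simplex" "R' \<in> open_simplex" using R(1) R'(1) by (simp_all add: aff_L_def)
  have "KL R R' = r' - r"
    using KL_compensation[OF rows os(2,1) l(2)] r r' l(1) by (simp flip: sum_distrib_right)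
  moreover have "KL R' R = r - r'"
    using KL_compensation[OF rows os m(2)] r r' m(1) by (simp flip: sum_distrib_right)
  ultimately have "KL R R' = 0" using KL_nonneg[OF os] KL_nonneg[OF os(2,1)] by linarith
  then show ?thesis using KL_eq_0_iff[OF os] by simp
qed

lemma equidistant_eq_proj:
  fixes P :: "nat \<Rightarrow> 'b::finite \<Rightarrow> real"
  assumes I: "finite I" "I \<noteq> {}" and rows: "\<forall>i\<in>I. P i \<in> open_simplex"
    and Q': "Q' \<in> open_simplex" "KL_equidistant P I Q'"
  shows "equidistant P I = proj Q' (aff_L P I)"
  unfolding equidistant_def
proof (rule the_equality)
  show "proj Q' (aff_L P I) \<in> aff_L P I \<and>
      (\<forall>i\<in>I. \<forall>k\<in>I. KL (P i) (proj Q' (aff_L P I)) = KL (P k) (proj Q' (aff_L P I)))"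
    using proj_in_aff_L[OF I rows Q'(1)] proj_KL_equidistant[OF I rows Q']
    unfolding KL_equidistant_iff by blast
  show "R = proj Q' (aff_L P I)"
    if "R \<in> aff_L P I \<and> (\<forall>i\<in>I. \<forall>k\<in>I. KL (P i) R = KL (P k) R)" for R
    using aff_L_KL_equidistant_unique[OF rows _ _ proj_in_aff_L[OF I rows Q'(1)]
        proj_KL_equidistant[OF I rows Q']] that
    unfolding KL_equidistant_iff by blast
qed

lemma proj_face_KL_equidistant:
  fixes P :: "nat \<Rightarrow> 'b::finite \<Rightarrow> real"
  assumes J: "finite J" "J \<noteq> {}" "J \<subseteq> I" and rows: "\<forall>i\<in>J. P i \<in> open_simplex"
    and Q: "Q \<in> open_simplex" "KL_equidistant P I Q"
  shows "proj Q (aff_L P J) \<in> aff_L P J" "KL_equidistant P J (proj Q (aff_L P J))"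
  using proj_in_aff_L[OF J(1,2) rows Q(1)]
    proj_KL_equidistant[OF J(1,2) rows Q(1) KL_equidistant_subset[OF J(3) Q(2)]] by simp_all

text \<open>A Gram-matrix argument: the linear map \<open>x \<mapsto> (\<langle>d\<^sub>i, \<Sum>\<^sub>k x\<^sub>k d\<^sub>k\<rangle>)\<^sub>i\<close> on \<open>\<real>\<^sup>3\<close> is injective,
  hence surjective.\<close>
lemma exists_inner_eq_3:
  fixes d2 d3 d4 :: "'b::finite \<Rightarrow> real"
  assumes indep: "\<And>a b c. \<forall>j. a * d2 j + b * d3 j + c * d4 j = 0 \<Longrightarrow> a = 0 \<and> b = 0 \<and> c = 0"
  obtains v where "(\<Sum>j\<in>UNIV. d2 j * v j) = c2" "(\<Sum>j\<in>UNIV. d3 j * v j) = c3"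
    "(\<Sum>j\<in>UNIV. d4 j * v j) = c4"
proof -
  define vec :: "real \<times> real \<times> real \<Rightarrow> 'b \<Rightarrow> real"
    where "vec x j = fst x * d2 j + fst (snd x) * d3 j + snd (snd x) * d4 j" for x j
  define g where "g x = ((\<Sum>j\<in>UNIV. d2 j * vec x j), (\<Sum>j\<in>UNIV. d3 j * vec x j),
                         (\<Sum>j\<in>UNIV. d4 j * vec x j))" for x
  have lin: "linear g"
    by (rule linearI) (simp_all add: g_def vec_def algebra_simps sum.distrib sum_distrib_left)
  have "x = 0" if "g x = 0" for x
  proof -
    have "(\<Sum>j\<in>UNIV. (vec x j)\<^sup>2) = fst x * (\<Sum>j\<in>UNIV. d2 j * vec x j)
        + fst (snd x) * (\<Sum>j\<in>UNIV. d3 j * vec x j) + snd (snd x) * (\<Sum>j\<in>UNIV. d4 j * vec x j)"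
      unfolding sum_distrib_left sum.distrib[symmetric]
      by (rule sum.cong) (simp_all add: vec_def power2_eq_square algebra_simps)
    also have "\<dots> = 0" using that by (simp add: g_def zero_prod_def)
    finally have "\<forall>j. vec x j = 0" by (simp add: sum_nonneg_eq_0_iff)
    then have "fst x = 0 \<and> fst (snd x) = 0 \<and> snd (snd x) = 0" using indep unfolding vec_def by blast
    then show "x = 0" by (simp add: prod_eq_iff)
  qed
  then have "inj g" using linear_injective_0[OF lin] by blast
  then obtain x where "g x = (c2, c3, c4)"
    using linear_inj_imp_surj[OF lin] by (metis surjD)
  then show ?thesis by (intro that[of "vec x"]) (simp_all add: g_def)
qed

lemma exists_KL_equidistant_4:
  fixes P :: "nat \<Rightarrow> 'b::finite \<Rightarrow> real"
  assumes rows: "\<forall>i\<in>{1..4}. P i \<in> open_simplex" and gp: "general_position P 4"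
  obtains Q' where "Q' \<in> open_simplex" "KL_equidistant P {1..4} Q'"
proof -
  define H where "H i = (\<Sum>j\<in>UNIV. P i j * ln (P i j))" for i
  obtain v where "(\<Sum>j\<in>UNIV. (P 2 j - P 1 j) * v j) = H 2 - H 1"
    "(\<Sum>j\<in>UNIV. (P 3 j - P 1 j) * v j) = H 3 - H 1" "(\<Sum>j\<in>UNIV. (P 4 j - P 1 j) * v j) = H 4 - H 1"
    by (rule exists_inner_eq_3[of "\<lambda>j. P 2 j - P 1 j" "\<lambda>j. P 3 j - P 1 j" "\<lambda>j. P 4 j - P 1 j",
          OF general_position_4D[OF gp]])
  then have v: "(\<Sum>j\<in>UNIV. (P i j - P 1 j) * v j) = H i - H 1" if "i \<in> {2,3,4}" for i
    using that by auto
  define Z where "Z = (\<Sum>j\<in>UNIV. exp (v j))"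
  have "Z > 0" unfolding Z_def by (intro sum_pos) auto
  define Q' where "Q' j = exp (v j) / Z" for j
  have Q': "Q' \<in> open_simplex"
    unfolding open_simplex_def Q'_def using \<open>Z > 0\<close> by (simp add: Z_def flip: sum_divide_distrib)
  have KL_Q': "KL (P i) Q' = H i - (\<Sum>j\<in>UNIV. P i j * v j) + ln Z" if "i \<in> {1..4}" for i
  proof -
    have "\<And>j. P i j > 0" "\<And>j. Q' j > 0" using that rows open_simplex_pos Q' by blast+
    moreover have "ln (Q' j) = v j - ln Z" for j
      unfolding Q'_def using \<open>Z > 0\<close> by (simp add: ln_div)
    ultimately have "KL (P i) Q' = (\<Sum>j\<in>UNIV. P i j * (ln (P i j) - (v j - ln Z)))"
      by (simp add: KL_eq_sum_ln_diff)
    also have "\<dots> = H i - (\<Sum>j\<in>UNIV. P i j * (v j - ln Z))"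
      by (simp add: H_def right_diff_distrib sum_subtractf)
    also have "\<dots> = H i - (\<Sum>j\<in>UNIV. P i j * v j) + ln Z"
      using that rows by (simp add: right_diff_distrib sum_subtractf open_simplex_sum
          flip: sum_distrib_right)
    finally show ?thesis .
  qed
  have equi: "KL (P i) Q' = KL (P 1) Q'" if "i \<in> {1..4}" for i
  proof (cases "i = 1")
    case False
    with that have "i \<in> {2,3,4}" by auto
    then show ?thesis
      using v[of i] KL_Q' that by (simp add: left_diff_distrib sum_subtractf)
  qed simp
  show ?thesis by (rule that[OF Q']) (use equi in \<open>unfold KL_equidistant_def, blast\<close>)
qed

text \<open>Compare the compensation identities at \<open>S\<close> and at \<open>T\<close>.\<close>
lemma KL_negative_vertex_le:
  fixes P :: "nat \<Rightarrow> 'b::finite \<Rightarrow> real"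
  assumes rows: "\<forall>i\<in>insert a K. P i \<in> open_simplex" and K: "finite K" "a \<notin> K" "k \<in> K"
    and S: "S \<in> open_simplex" "S = comb P (insert a K) l" "sum l (insert a K) = 1" "l a < 0"
      "KL_equidistant P (insert a K) S"
    and T: "T \<in> aff_L P K" "KL_equidistant P K T"
  shows "KL (P a) T \<le> KL (P k) T"
proof -
  obtain s where s: "\<forall>i\<in>insert a K. KL (P i) S = s" using S(5) by (auto simp: KL_equidistant_def)
  obtain t where t: "\<forall>i\<in>K. KL (P i) T = t" using T(2) by (auto simp: KL_equidistant_def)
  obtain n where n: "sum n K = 1" "T = comb P K n" using T(1) by (auto simp: aff_L_def)
  have "T \<in> open_simplex" using T(1) by (rule aff_L_open_simplex)
  have "(\<Sum>i\<in>K. n i * (KL (P i) S - KL (P i) T)) = KL T S"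
    by (rule KL_compensation) (use rows S(1) \<open>T \<in> open_simplex\<close> n(2) in auto)
  moreover have "(\<Sum>i\<in>K. n i * (KL (P i) S - KL (P i) T)) = (\<Sum>i\<in>K. n i * (s - t))"
    using s t by (intro sum.cong) auto
  ultimately have "s - t = KL T S" using n(1) by (simp flip: sum_distrib_right)
  have "(\<Sum>i\<in>insert a K. l i * (KL (P i) T - KL (P i) S)) = KL S T"
    by (rule KL_compensation) (use rows S(1,2) \<open>T \<in> open_simplex\<close> in auto)
  moreover have "(\<Sum>i\<in>K. l i * (KL (P i) T - KL (P i) S)) = (\<Sum>i\<in>K. l i * (t - s))"
    using s t by (intro sum.cong) auto
  moreover have "sum l K = 1 - l a" using S(3) K by simp
  ultimately have "l a * (KL (P a) T - s) + (1 - l a) * (t - s) = KL S T"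
    using s K by (simp flip: sum_distrib_right)
  with \<open>s - t = KL T S\<close> have "l a * (KL (P a) T - t) = KL S T + KL T S"
    by (simp add: algebra_simps)
  moreover have "0 \<le> KL S T + KL T S"
    using KL_nonneg[OF S(1) \<open>T \<in> open_simplex\<close>] KL_nonneg[OF \<open>T \<in> open_simplex\<close> S(1)] by simp
  ultimately have "0 \<le> l a * (KL (P a) T - t)" by simp
  with \<open>l a < 0\<close> t K(3) show ?thesis by (auto simp: zero_le_mult_iff)
qed

lemma equidistant_segment_weight_nonneg:
  fixes P :: "nat \<Rightarrow> 'b::finite \<Rightarrow> real"
  assumes rows: "P a \<in> open_simplex" "P b \<in> open_simplex" "P a \<noteq> P b"
    and T: "T \<in> open_simplex" "T = comb P {a, b} n" "n a + n b = 1" "KL (P a) T = KL (P b) T"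
  shows "0 \<le> n b"
proof -
  have "a \<noteq> b" using rows(3) by auto
  then have "n a * (KL (P a) (P a) - KL (P a) T) + n b * (KL (P b) (P a) - KL (P b) T) = KL T (P a)"
    using KL_compensation[of "{a, b}" P "P a" T n] rows T by simp
  moreover have "n a = 1 - n b" using T(3) by simp
  ultimately have "n b * KL (P b) (P a) = KL T (P a) + KL (P a) T"
    using T(4) by (simp add: KL_self algebra_simps)
  moreover have "0 < KL (P b) (P a)"
    using KL_nonneg[OF rows(2,1)] KL_eq_0_iff[OF rows(2,1)] rows(3) by auto
  moreover have "0 \<le> KL T (P a) + KL (P a) T"
    using KL_nonneg[OF T(1) rows(1)] KL_nonneg[OF rows(1) T(1)] by simp
  ultimately have "0 \<le> n b * KL (P b) (P a)" "0 < KL (P b) (P a)" by simp_all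
  then show ?thesis by (auto simp: zero_le_mult_iff)
qed

section \<open>Capacity\<close>

lemma comb_in_open_simplex:
  fixes P :: "nat \<Rightarrow> 'b::finite \<Rightarrow> real"
  assumes rows: "\<forall>i\<in>I. P i \<in> open_simplex" and l: "l \<in> closed_simplex I"
  shows "comb P I l \<in> open_simplex"
proof -
  have l_nonneg: "\<forall>i\<in>I. 0 \<le> l i" and "sum l I = 1" using l by (auto simp: closed_simplex_def)
  then have "finite I" using sum.infinite by force
  obtain k where "k \<in> I" "l k > 0"
    using \<open>sum l I = 1\<close> l_nonneg by (metis less_eq_real_def sum_nonpos not_one_le_zero)
  have "comb P I l j > 0" for j
    unfolding comb_def
  proof (rule sum_pos2[OF \<open>finite I\<close> \<open>k \<in> I\<close>])
    show "0 < l k * P k j" using \<open>l k > 0\<close> \<open>k \<in> I\<close> rows open_simplex_pos[of "P k" j] by simp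
    show "0 \<le> l i * P i j" if "i \<in> I" for i
      using that l_nonneg rows open_simplex_pos[of "P i" j] by (simp add: less_imp_le)
  qed
  then show ?thesis using sum_comb[OF rows] \<open>sum l I = 1\<close> by (simp add: open_simplex_def)
qed

lemma mutual_info_eq_KL_diff:
  fixes P :: "nat \<Rightarrow> 'b::finite \<Rightarrow> real"
  assumes rows: "\<forall>i\<in>I. P i \<in> open_simplex" and l: "l \<in> closed_simplex I"
    and Q: "Q \<in> open_simplex"
  shows "mutual_info P I l = (\<Sum>i\<in>I. l i * KL (P i) Q) - KL (comb P I l) Q"
proof -
  have "mutual_info P I l = (\<Sum>i\<in>I. l i * KL (P i) (comb P I l))"
    unfolding mutual_info_def KL_def by (simp add: sum_distrib_left mult.assoc)
  also have "\<dots> = (\<Sum>i\<in>I. l i * KL (P i) Q) - (\<Sum>i\<in>I. l i * (KL (P i) Q - KL (P i) (comb P I l)))"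
    by (simp add: algebra_simps flip: sum_subtractf)
  also have "(\<Sum>i\<in>I. l i * (KL (P i) Q - KL (P i) (comb P I l))) = KL (comb P I l) Q"
    by (rule KL_compensation[OF rows Q comb_in_open_simplex[OF rows l] refl])
  finally show ?thesis .
qed

lemma capacity_KKT:
  fixes P :: "nat \<Rightarrow> 'b::finite \<Rightarrow> real"
  assumes rows: "\<forall>i\<in>I. P i \<in> open_simplex" and \<nu>: "\<nu> \<in> closed_simplex I"
    and bound: "\<forall>i\<in>I. KL (P i) (comb P I \<nu>) \<le> r"
    and active: "\<forall>i\<in>I. \<nu> i \<noteq> 0 \<longrightarrow> KL (P i) (comb P I \<nu>) = r"
  shows "capacity P I = r" and "mutual_info P I \<nu> = r"
    and "\<And>l. l \<in> closed_simplex I \<Longrightarrow> mutual_info P I l = r \<Longrightarrow> comb P I l = comb P I \<nu>"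
proof -
  define Q where "Q = comb P I \<nu>"
  have Q: "Q \<in> open_simplex" unfolding Q_def by (rule comb_in_open_simplex[OF rows \<nu>])
  have upper: "mutual_info P I l \<le> r - KL (comb P I l) Q" if l: "l \<in> closed_simplex I" for l
  proof -
    have "(\<Sum>i\<in>I. l i * KL (P i) Q) \<le> (\<Sum>i\<in>I. l i * r)"
      using l bound unfolding Q_def closed_simplex_def by (auto intro: sum_mono mult_left_mono)
    also have "\<dots> = r" using l by (simp add: closed_simplex_def flip: sum_distrib_right)
    finally show ?thesis using mutual_info_eq_KL_diff[OF rows l Q] by linarith
  qed
  have "(\<Sum>i\<in>I. \<nu> i * KL (P i) Q) = (\<Sum>i\<in>I. \<nu> i * r)"
    using active unfolding Q_def by (intro sum.cong) auto
  then show MI_\<nu>: "mutual_info P I \<nu> = r"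
    using mutual_info_eq_KL_diff[OF rows \<nu> Q] \<nu>
    by (simp add: Q_def KL_self closed_simplex_def flip: sum_distrib_right)
  show "capacity P I = r"
    unfolding capacity_def
  proof (rule cSup_eq_maximum)
    show "r \<in> mutual_info P I ` closed_simplex I" using MI_\<nu> \<nu> by force
    show "x \<le> r" if "x \<in> mutual_info P I ` closed_simplex I" for x
      using that upper KL_nonneg[OF comb_in_open_simplex[OF rows] Q] by fastforce
  qed
  show "comb P I l = comb P I \<nu>" if "l \<in> closed_simplex I" "mutual_info P I l = r" for l
  proof -
    have "KL (comb P I l) Q = 0"
      using upper[OF that(1)] that(2) KL_nonneg[OF comb_in_open_simplex[OF rows that(1)] Q] by simp
    then show ?thesis using KL_eq_0_iff[OF comb_in_open_simplex[OF rows that(1)] Q] Q_def by simp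
  qed
qed

lemma capacity_on_edge:
  fixes P :: "nat \<Rightarrow> 'b::finite \<Rightarrow> real"
  assumes rows: "\<forall>i\<in>I. P i \<in> open_simplex" and "finite I" and ab: "a \<in> I" "b \<in> I" "P a \<noteq> P b"
    and Q: "Q \<in> aff_L P {a, b}" "KL_equidistant P {a, b} Q"
    and bound: "\<forall>i\<in>I. KL (P i) Q \<le> KL (P a) Q"
  shows "capacity P I = KL (P a) Q
       \<and> (\<exists>l\<in>closed_simplex I. mutual_info P I l = capacity P I)
       \<and> (\<forall>l\<in>closed_simplex I. mutual_info P I l = capacity P I \<longrightarrow> comb P I l = Q)"
proof -
  have "a \<noteq> b" using ab(3) by auto
  have equi: "KL (P a) Q = KL (P b) Q" using Q(2) unfolding KL_equidistant_iff by blast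
  obtain n where n: "sum n {a, b} = 1" "Q = comb P {a, b} n" using Q(1) by (auto simp: aff_L_def)
  have "n a + n b = 1" using n(1) \<open>a \<noteq> b\<close> by simp
  have os: "P a \<in> open_simplex" "P b \<in> open_simplex" "Q \<in> open_simplex"
    using rows ab Q(1) by (auto simp: aff_L_def)
  have "0 \<le> n b"
    by (rule equidistant_segment_weight_nonneg[OF os(1,2) ab(3) os(3) n(2) \<open>n a + n b = 1\<close> equi])
  have "0 \<le> n a"
  proof (rule equidistant_segment_weight_nonneg[OF os(2,1) ab(3)[symmetric] os(3)])
    show "Q = comb P {b, a} n" using n(2) by (simp add: insert_commute)
    show "n b + n a = 1" "KL (P b) Q = KL (P a) Q" using \<open>n a + n b = 1\<close> equi by simp_all
  qed
  define \<nu> where "\<nu> i = (if i \<in> {a, b} then n i else 0)" for i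
  have "{a, b} \<subseteq> I" using ab by simp
  have "sum \<nu> I = sum \<nu> {a, b}"
    by (rule sum.mono_neutral_right[OF \<open>finite I\<close> \<open>{a, b} \<subseteq> I\<close>]) (simp add: \<nu>_def)
  also have "\<dots> = sum n {a, b}" by (rule sum.cong) (auto simp: \<nu>_def)
  also have "\<dots> = 1" by (rule n(1))
  finally have "\<nu> \<in> closed_simplex I"
    using \<open>{a, b} \<subseteq> I\<close> \<open>0 \<le> n a\<close> \<open>0 \<le> n b\<close> by (auto simp: closed_simplex_def \<nu>_def)
  have "comb P I \<nu> = comb P {a, b} \<nu>"
    unfolding comb_def
    by (rule ext, rule sum.mono_neutral_right[OF \<open>finite I\<close> \<open>{a, b} \<subseteq> I\<close>]) (simp add: \<nu>_def)
  also have "\<dots> = comb P {a, b} n" unfolding comb_def by (intro ext sum.cong) (auto simp: \<nu>_def)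
  also have "\<dots> = Q" by (rule n(2)[symmetric])
  finally have "comb P I \<nu> = Q" .
  moreover have "\<forall>i\<in>I. \<nu> i \<noteq> 0 \<longrightarrow> KL (P i) Q = KL (P a) Q"
    using equi by (auto simp: \<nu>_def)
  ultimately have "capacity P I = KL (P a) Q" "mutual_info P I \<nu> = KL (P a) Q"
    "\<And>l. l \<in> closed_simplex I \<Longrightarrow> mutual_info P I l = KL (P a) Q \<Longrightarrow> comb P I l = Q"
    using capacity_KKT[OF rows \<open>\<nu> \<in> closed_simplex I\<close>, of "KL (P a) Q"] bound by simp_all
  then show ?thesis using \<open>\<nu> \<in> closed_simplex I\<close> by auto
qed

theorem theorem21:
  fixes P :: "nat \<Rightarrow> 'b::finite \<Rightarrow> real"
  assumes rows: "\<forall>i\<in>{1..4}. P i \<in> open_simplex"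
    and gp: "general_position P 4"
    and l0: "bary P {1..4} (equidistant P {1..4}) 1 < 0"
            "bary P {1..4} (equidistant P {1..4}) 2 < 0"
            "bary P {1..4} (equidistant P {1..4}) 3 \<ge> 0"
            "bary P {1..4} (equidistant P {1..4}) 4 \<ge> 0"
    and l12: "bary P {1..4} (proj (equidistant P {1..4}) (aff_L P {1,3,4})) 1 < 0"
    and l11: "bary P {1..4} (proj (equidistant P {1..4}) (aff_L P {2,3,4})) 2 < 0"
             "bary P {1..4} (proj (equidistant P {1..4}) (aff_L P {2,3,4})) 3 \<ge> 0"
             "bary P {1..4} (proj (equidistant P {1..4}) (aff_L P {2,3,4})) 4 \<ge> 0"
  shows "capacity P {1..4}
           = KL (P 3) (proj (proj (equidistant P {1..4}) (aff_L P {2,3,4})) (aff_L P {3,4}))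
       \<and> (\<exists>l\<in>closed_simplex {1..4}. mutual_info P {1..4} l = capacity P {1..4})
       \<and> (\<forall>l\<in>closed_simplex {1..4}. mutual_info P {1..4} l = capacity P {1..4} \<longrightarrow>
            comb P {1..4} l = proj (proj (equidistant P {1..4}) (aff_L P {2,3,4})) (aff_L P {3,4}))"
proof -
  define Q0 where "Q0 = equidistant P {1..4}"
  define Q1 where "Q1 = proj Q0 (aff_L P {2,3,4})"
  define Q12 where "Q12 = proj Q0 (aff_L P {1,3,4})"
  define Q2 where "Q2 = proj Q1 (aff_L P {3,4})"
  have faces: "{2,3,4} \<subseteq> {1..4::nat}" "{1,3,4} \<subseteq> {1..4::nat}" by auto
  obtain Q' where Q': "Q' \<in> open_simplex" "KL_equidistant P {1..4} Q'"
    by (rule exists_KL_equidistant_4[OF rows gp])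
  have "Q0 = proj Q' (aff_L P {1..4})"
    unfolding Q0_def by (rule equidistant_eq_proj[OF _ _ rows Q']) auto
  then have Q0: "Q0 \<in> open_simplex" "KL_equidistant P {1..4} Q0"
    using proj_face_KL_equidistant[of "{1..4}" "{1..4}" P Q'] rows Q' aff_L_open_simplex by auto
  have Q1: "Q1 \<in> aff_L P {2,3,4}" "KL_equidistant P {2,3,4} Q1"
    unfolding Q1_def using proj_face_KL_equidistant[of "{2,3,4}" "{1..4}" P Q0] rows Q0 by auto
  have Q12: "Q12 \<in> aff_L P {1,3,4}" "KL_equidistant P {1,3,4} Q12"
    unfolding Q12_def using proj_face_KL_equidistant[of "{1,3,4}" "{1..4}" P Q0] rows Q0 by auto
  have Q2: "Q2 \<in> aff_L P {3,4}" "KL_equidistant P {3,4} Q2"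
    unfolding Q2_def using proj_face_KL_equidistant[of "{3,4}" "{2,3,4}" P Q1] rows Q1
    by (auto intro: aff_L_open_simplex)
  have neg: "bary P {1..4} Q1 2 < 0" "bary P {1..4} Q12 1 < 0"
    using l11(1) l12 unfolding Q1_def Q12_def Q0_def .
  have "KL (P 2) Q2 \<le> KL (P 3) Q2"
    by (rule KL_negative_vertex_le[of 2 "{3,4}" P 3 Q1 "bary P {1..4} Q1"])
       (use neg rows Q1 Q2 bary_aff_L[OF gp faces(1) Q1(1)] aff_L_open_simplex[OF Q1(1)] in auto)
  moreover have "KL (P 1) Q2 \<le> KL (P 3) Q2"
    by (rule KL_negative_vertex_le[of 1 "{3,4}" P 3 Q12 "bary P {1..4} Q12"])
       (use neg rows Q12 Q2 bary_aff_L[OF gp faces(2) Q12(1)] aff_L_open_simplex[OF Q12(1)] in auto)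
  moreover have "KL (P 4) Q2 = KL (P 3) Q2" using Q2(2) unfolding KL_equidistant_iff by blast
  moreover have "{1..4::nat} = {1,2,3,4}" by auto
  ultimately have "\<forall>i\<in>{1..4}. KL (P i) Q2 \<le> KL (P 3) Q2" by auto
  moreover have "P 3 \<noteq> P 4" using general_position_4D[OF gp, of 0 1 "-1"] by auto
  ultimately show ?thesis
    unfolding Q0_def[symmetric] Q1_def[symmetric] Q2_def[symmetric]
    by (intro capacity_on_edge[OF rows _ _ _ _ Q2]) auto
qed

end
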